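(* Let $N\ge1$, $\lambda,\mu\in\mathbb{K}$, $\mu\ne0$. The Lie algebra $\mathfrak{g}^{(2)}(N,\lambda,\mu)_+$ is isomorphic to $V^{\oplus N}\rtimes\mathfrak{g}_0$, where $\mathfrak{g}_0$ is the one-dimensional abelian Lie algebra spanned by $z$ and $V$ is the right $\mathfrak{g}_0$-module with basis $(f_i)_{i\ge0}$ and action $f_i.z=f_{i+1}$.
   Context: Base field $\mathbb{K}$ of characteristic zero. $\mathfrak{g}^{(2)}(N,\lambda,\mu)$ is $\mathbb{K}[X]$ with the preLie product $X^i\bullet X^j=i\lambda X^i$ if $j=0$, $i\mu X^{i+N}$ if $j=N$, and $0$ otherwise. $\mathfrak{g}^{(2)}(N,\lambda,\mu)_+$ denotes $\mathbb{K}[X]_+=\mathrm{Vect}(X^i,i\ge1)$ with bracket $[P,Q]=P\bullet Q-Q\bullet P$. For a Lie algebra $\mathfrak{g}$ and a right $\mathfrak{g}$-module $M$, $M\rtimes\mathfrak{g}$ is $M\oplus\mathfrak{g}$ with $M$ abelian, $[m,x]=m.x$ for $m\in M$, $x\in\mathfrak{g}$, and the bracket of $\mathfrak{g}$ on $\mathfrak{g}$. *)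

theory Defs
  imports "HOL-Computational_Algebra.Polynomial"
begin

definition g2_basis_prod :: "nat \<Rightarrow> 'k::field \<Rightarrow> 'k \<Rightarrow> nat \<Rightarrow> nat \<Rightarrow> 'k poly" where
  "g2_basis_prod N lam mu i j =
     (if j = 0 then smult (of_nat i * lam) (monom 1 i)
      else if j = N then smult (of_nat i * mu) (monom 1 (i + N))
      else 0)"

definition g2_prod :: "nat \<Rightarrow> 'k::field \<Rightarrow> 'k \<Rightarrow> 'k poly \<Rightarrow> 'k poly \<Rightarrow> 'k poly" where
  "g2_prod N lam mu P Q =
     (\<Sum>i\<le>degree P. \<Sum>j\<le>degree Q. smult (coeff P i * coeff Q j) (g2_basis_prod N lam mu i j))"

definition g2_bracket :: "nat \<Rightarrow> 'k::field \<Rightarrow> 'k \<Rightarrow> 'k poly \<Rightarrow> 'k poly \<Rightarrow> 'k poly" where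
  "g2_bracket N lam mu P Q = g2_prod N lam mu P Q - g2_prod N lam mu Q P"

definition poly_plus :: "'k::field poly set" where
  "poly_plus = {P. coeff P 0 = 0}"

text \<open>V is encoded as K[t]; basis vector f_i is monom 1 i.\<close>
definition V_basis :: "nat \<Rightarrow> 'k::field poly" where
  "V_basis i = monom 1 i"

definition V_act_z :: "'k::field poly \<Rightarrow> 'k poly" where
  "V_act_z v = (\<Sum>i\<le>degree v. smult (coeff v i) (V_basis (Suc i)))"

text \<open>V^(direct sum N): families indexed by j < N (zero outside).\<close>
definition VN_carrier :: "nat \<Rightarrow> (nat \<Rightarrow> 'k::field poly) set" where
  "VN_carrier N = {m. \<forall>j\<ge>N. m j = 0}"

definition VN_act :: "(nat \<Rightarrow> 'k::field poly) \<Rightarrow> 'k \<Rightarrow> (nat \<Rightarrow> 'k poly)" where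
  "VN_act m c = (\<lambda>j. smult c (V_act_z (m j)))"

definition sd_bracket ::
  "('m::minus \<Rightarrow> 'g \<Rightarrow> 'm) \<Rightarrow> ('g \<Rightarrow> 'g \<Rightarrow> 'g) \<Rightarrow> 'm \<times> 'g \<Rightarrow> 'm \<times> 'g \<Rightarrow> 'm \<times> 'g" where
  "sd_bracket act br p q = (act (fst p) (snd q) - act (fst q) (snd p), br (snd p) (snd q))"

text \<open>Operations on V^N x| g0 (g0 one-dimensional abelian, identified with K via c z).\<close>
definition VN_sd_add :: "(nat \<Rightarrow> 'k::field poly) \<times> 'k \<Rightarrow> (nat \<Rightarrow> 'k poly) \<times> 'k \<Rightarrow> (nat \<Rightarrow> 'k poly) \<times> 'k" where
  "VN_sd_add p q = (\<lambda>j. fst p j + fst q j, snd p + snd q)"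

definition VN_sd_smult :: "'k::field \<Rightarrow> (nat \<Rightarrow> 'k poly) \<times> 'k \<Rightarrow> (nat \<Rightarrow> 'k poly) \<times> 'k" where
  "VN_sd_smult c p = (\<lambda>j. smult c (fst p j), c * snd p)"

definition VN_sd_bracket :: "(nat \<Rightarrow> 'k::field poly) \<times> 'k \<Rightarrow> (nat \<Rightarrow> 'k poly) \<times> 'k \<Rightarrow> (nat \<Rightarrow> 'k poly) \<times> 'k" where
  "VN_sd_bracket = sd_bracket VN_act (\<lambda>_ _. 0)"

definition VN_sd_carrier :: "nat \<Rightarrow> ((nat \<Rightarrow> 'k::field poly) \<times> 'k) set" where
  "VN_sd_carrier N = VN_carrier N \<times> UNIV"

definition lie_iso ::
  "'a set \<Rightarrow> ('k \<Rightarrow> 'a \<Rightarrow> 'a) \<Rightarrow> ('a \<Rightarrow> 'a \<Rightarrow> 'a) \<Rightarrow> ('a \<Rightarrow> 'a \<Rightarrow> 'a) \<Rightarrow>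
   'b set \<Rightarrow> ('k \<Rightarrow> 'b \<Rightarrow> 'b) \<Rightarrow> ('b \<Rightarrow> 'b \<Rightarrow> 'b) \<Rightarrow> ('b \<Rightarrow> 'b \<Rightarrow> 'b) \<Rightarrow>
   ('a \<Rightarrow> 'b) \<Rightarrow> bool" where
  "lie_iso A sA addA brA B sB addB brB \<phi> \<longleftrightarrow>
     bij_betw \<phi> A B \<and>
     (\<forall>x\<in>A. \<forall>y\<in>A. \<phi> (addA x y) = addB (\<phi> x) (\<phi> y)) \<and>
     (\<forall>c. \<forall>x\<in>A. \<phi> (sA c x) = sB c (\<phi> x)) \<and>
     (\<forall>x\<in>A. \<forall>y\<in>A. \<phi> (brA x y) = brB (\<phi> x) (\<phi> y))"

end

theory Submission
  imports Defs
begin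

text \<open>On K[X]_+ the only non-zero products are X^a \<bullet> X^N = a mu X^(a+N), so
  [X^a, X^N] = a mu X^(a+N) and every bracket not involving X^N vanishes. Hence X^N acts as z,
  and the other monomials fall into N strings of exponents n, n + N, n + 2N, ... starting at
  1, ..., N - 1 and 2N. Since a mu \<noteq> 0 in characteristic zero, rescaling the monomials of
  each string turns it into a copy of V.\<close>

lemma sum_degree_coeff_delta:
  fixes Q :: "'a::semiring_0 poly"
  shows "(\<Sum>j\<le>degree Q. coeff Q j * (if j = a then c else 0)) = coeff Q a * c"
proof -
  have "(\<Sum>j\<le>degree Q. coeff Q j * (if j = a then c else 0)) =
      (\<Sum>j\<le>degree Q. if j = a then coeff Q a * c else 0)"
    by (rule sum.cong) auto
  then show ?thesis
    by (simp add: sum.delta coeff_eq_0)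
qed

lemma coeff_g2_basis_prod:
  assumes "N \<noteq> 0"
  shows "coeff (g2_basis_prod N lam mu i j) n =
           (if j = 0 then (if i = n then of_nat n * lam else 0) else 0) +
           (if j = N then (if N \<le> n \<and> i = n - N then of_nat (n - N) * mu else 0) else 0)"
  using assms by (auto simp: g2_basis_prod_def)

lemma coeff_g2_prod:
  assumes "N \<noteq> 0"
  shows "coeff (g2_prod N lam mu P Q) n =
           coeff Q 0 * lam * of_nat n * coeff P n +
           (if N \<le> n then coeff Q N * mu * of_nat (n - N) * coeff P (n - N) else 0)"
proof -
  have inner: "(\<Sum>j\<le>degree Q. coeff Q j * coeff (g2_basis_prod N lam mu i j) n) =
      (if i = n then coeff Q 0 * lam * of_nat n else 0) +
      (if N \<le> n \<and> i = n - N then coeff Q N * mu * of_nat (n - N) else 0)" for i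
    by (simp add: coeff_g2_basis_prod[OF assms] distrib_left sum.distrib sum_degree_coeff_delta
        if_distrib mult_ac coeff_eq_0 cong: if_cong)
  have "coeff (g2_prod N lam mu P Q) n =
      (\<Sum>i\<le>degree P. coeff P i * (\<Sum>j\<le>degree Q. coeff Q j * coeff (g2_basis_prod N lam mu i j) n))"
    by (simp add: g2_prod_def coeff_sum sum_distrib_left mult.assoc)
  also have "\<dots> = (\<Sum>i\<le>degree P. coeff P i * (if i = n then coeff Q 0 * lam * of_nat n else 0)) +
      (if N \<le> n then (\<Sum>i\<le>degree P. coeff P i * (if i = n - N then coeff Q N * mu * of_nat (n - N) else 0))
       else 0)"
    unfolding inner by (cases "N \<le> n") (simp_all add: distrib_left sum.distrib)
  finally show ?thesis
    by (simp only: sum_degree_coeff_delta mult_ac)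
qed

lemma coeff_g2_bracket:
  assumes "N \<noteq> 0" "P \<in> poly_plus" "Q \<in> poly_plus"
  shows "coeff (g2_bracket N lam mu P Q) n =
           (if N \<le> n then mu * of_nat (n - N) * (coeff Q N * coeff P (n - N) - coeff P N * coeff Q (n - N))
            else 0)"
  using assms by (simp add: g2_bracket_def coeff_g2_prod poly_plus_def algebra_simps)

lemma coeff_g2_bracket_less:
  "N \<noteq> 0 \<Longrightarrow> P \<in> poly_plus \<Longrightarrow> Q \<in> poly_plus \<Longrightarrow> n < N \<Longrightarrow> coeff (g2_bracket N lam mu P Q) n = 0"
  by (simp add: coeff_g2_bracket)

lemma coeff_g2_bracket_add:
  "N \<noteq> 0 \<Longrightarrow> P \<in> poly_plus \<Longrightarrow> Q \<in> poly_plus \<Longrightarrow>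
   coeff (g2_bracket N lam mu P Q) (n + N) = mu * of_nat n * (coeff Q N * coeff P n - coeff P N * coeff Q n)"
  by (simp add: coeff_g2_bracket)

lemma V_act_z_eq_pCons: "V_act_z v = pCons 0 v"
proof (rule poly_eqI)
  fix k
  have "coeff (V_act_z v) k = (\<Sum>i\<le>degree v. coeff v i * (if i = k - 1 then (if k = 0 then 0 else 1) else 0))"
    by (auto simp: V_act_z_def V_basis_def coeff_sum coeff_monom intro!: sum.cong)
  then show "coeff (V_act_z v) k = coeff (pCons 0 v) k"
    by (cases k) (simp_all add: sum_degree_coeff_delta)
qed

text \<open>The monomials X^n with n \<ge> 1 and n \<noteq> N are split into the N strings
  chain_index N j 0, chain_index N j 1, ... (step N), for j < N. As X^N itself plays the role
  of z, the string of residue N - 1 starts at 2N instead of N.\<close>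

definition chain_start :: "nat \<Rightarrow> nat \<Rightarrow> nat" where
  "chain_start N j = (if Suc j = N then 2 * N else Suc j)"

definition chain_index :: "nat \<Rightarrow> nat \<Rightarrow> nat \<Rightarrow> nat" where
  "chain_index N j k = chain_start N j + k * N"

definition chain_of :: "nat \<Rightarrow> nat \<Rightarrow> nat" where
  "chain_of N n = (n - 1) mod N"

definition chain_pos :: "nat \<Rightarrow> nat \<Rightarrow> nat" where
  "chain_pos N n = (n - chain_start N (chain_of N n)) div N"

lemma chain_index_Suc [simp]: "chain_index N j (Suc k) = chain_index N j k + N"
  by (simp add: chain_index_def)

lemma chain_index_nonzero [simp]: "chain_index N j k \<noteq> 0"
  by (simp add: chain_index_def chain_start_def)

lemma chain_index_ge: "N \<ge> 1 \<Longrightarrow> chain_index N j k \<ge> Suc k"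
  by (cases "Suc j = N") (auto simp: chain_index_def chain_start_def intro: order.trans[of _ "k * N"])

lemma chain_index_neq: "j < N \<Longrightarrow> chain_index N j k \<noteq> N"
  by (cases k) (auto simp: chain_index_def chain_start_def)

lemma chain_index_eq: "chain_index N j k = Suc (j + (k + (if Suc j = N then 1 else 0)) * N)"
  by (simp add: chain_index_def chain_start_def)

lemma chain_of_chain_index: "j < N \<Longrightarrow> chain_of N (chain_index N j k) = j"
  by (simp add: chain_of_def chain_index_eq)

lemma chain_pos_chain_index: "j < N \<Longrightarrow> chain_pos N (chain_index N j k) = k"
  by (simp add: chain_pos_def chain_of_chain_index) (simp add: chain_index_def)

lemma chain_of_less: "N \<ge> 1 \<Longrightarrow> chain_of N n < N"
  by (simp add: chain_of_def)

lemma chain_index_le: "j < N \<Longrightarrow> chain_index N j k \<le> (k + 2) * N"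
  by (simp add: chain_index_def chain_start_def)

lemma chain_index_chain_of:
  assumes "N \<ge> 1" "n \<ge> 1" "n \<noteq> N"
  shows "chain_index N (chain_of N n) (chain_pos N n) = n"
proof -
  define r q where "r = (n - 1) mod N" and "q = (n - 1) div N"
  have "n = Suc (r + q * N)" and "r < N"
    using assms by (simp_all add: r_def q_def)
  then have start: "chain_start N r + (q - (if Suc r = N then 1 else 0)) * N = n"
    using assms by (cases q) (auto simp: chain_start_def)
  have "chain_of N n = r"
    by (simp add: chain_of_def r_def)
  moreover from this have "chain_pos N n = q - (if Suc r = N then 1 else 0)"
    using assms by (simp add: chain_pos_def flip: start)
  ultimately show ?thesis
    using start by (simp add: chain_index_def)
qed

text \<open>The basis vector f_k of the j-th copy of V is X^(chain_index N j k) / chain_scale N mu j k;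
  the factor is chosen so that [f_k, X^N] = f_(k+1).\<close>

fun chain_scale :: "nat \<Rightarrow> 'k::field_char_0 \<Rightarrow> nat \<Rightarrow> nat \<Rightarrow> 'k" where
  "chain_scale N mu j 0 = 1"
| "chain_scale N mu j (Suc k) = mu * of_nat (chain_index N j k) * chain_scale N mu j k"

lemma chain_scale_nonzero: "mu \<noteq> 0 \<Longrightarrow> chain_scale N mu j k \<noteq> 0"
  by (induction k) simp_all

definition chain_component :: "nat \<Rightarrow> 'k::field_char_0 \<Rightarrow> 'k poly \<Rightarrow> nat \<Rightarrow> 'k poly" where
  "chain_component N mu P j =
     (if j < N then Abs_poly (\<lambda>k. coeff P (chain_index N j k) / chain_scale N mu j k) else 0)"

definition g2_to_VN :: "nat \<Rightarrow> 'k::field_char_0 \<Rightarrow> 'k poly \<Rightarrow> (nat \<Rightarrow> 'k poly) \<times> 'k" where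
  "g2_to_VN N mu P = (chain_component N mu P, coeff P N)"

definition VN_to_g2 :: "nat \<Rightarrow> 'k::field_char_0 \<Rightarrow> (nat \<Rightarrow> 'k poly) \<times> 'k \<Rightarrow> 'k poly" where
  "VN_to_g2 N mu p = Abs_poly (\<lambda>n.
     if n = 0 then 0 else if n = N then snd p
     else coeff (fst p (chain_of N n)) (chain_pos N n) * chain_scale N mu (chain_of N n) (chain_pos N n))"

lemma coeff_chain_component:
  assumes "N \<ge> 1"
  shows "coeff (chain_component N mu P j) k =
           (if j < N then coeff P (chain_index N j k) / chain_scale N mu j k else 0)"
proof (cases "j < N")
  case True
  have "coeff (Abs_poly (\<lambda>k. coeff P (chain_index N j k) / chain_scale N mu j k)) =
      (\<lambda>k. coeff P (chain_index N j k) / chain_scale N mu j k)"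
  proof (rule coeff_Abs_poly)
    fix i assume "i > degree P"
    then show "coeff P (chain_index N j i) / chain_scale N mu j i = 0"
      using chain_index_ge[OF assms, where j = j and k = i] by (simp add: coeff_eq_0)
  qed
  then show ?thesis
    using True by (simp add: chain_component_def)
qed (simp add: chain_component_def)

lemma coeff_VN_to_g2:
  assumes "N \<ge> 1"
  shows "coeff (VN_to_g2 N mu (m, x)) n =
    (if n = 0 then 0 else if n = N then x
     else coeff (m (chain_of N n)) (chain_pos N n) * chain_scale N mu (chain_of N n) (chain_pos N n))"
proof -
  define D where "D = (\<Sum>j<N. degree (m j))"
  have "coeff (m (chain_of N n)) (chain_pos N n) = 0" if "n > (D + 2) * N" "n \<noteq> N" for n
  proof -
    have "n = chain_index N (chain_of N n) (chain_pos N n)"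
      using that assms by (simp add: chain_index_chain_of)
    also have "\<dots> \<le> (chain_pos N n + 2) * N"
      using chain_index_le chain_of_less[OF assms] .
    finally have "D < chain_pos N n"
      using that(1) by (meson add_le_mono1 mult_le_mono1 not_le order.strict_trans2)
    moreover have "degree (m (chain_of N n)) \<le> D"
      unfolding D_def by (rule member_le_sum) (use chain_of_less[OF assms] in auto)
    ultimately show ?thesis
      by (simp add: coeff_eq_0)
  qed
  then show ?thesis
    unfolding VN_to_g2_def by (subst coeff_Abs_poly[where n = "(D + 2) * N"]) auto
qed

lemma VN_to_g2_in_poly_plus:
  "N \<ge> 1 \<Longrightarrow> VN_to_g2 N mu p \<in> poly_plus"
  using coeff_VN_to_g2[of N mu "fst p" "snd p"] by (simp add: poly_plus_def)

lemma g2_to_VN_add: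
  assumes "N \<ge> 1"
  shows "g2_to_VN N mu (P + Q) = VN_sd_add (g2_to_VN N mu P) (g2_to_VN N mu Q)"
proof -
  have "chain_component N mu (P + Q) = (\<lambda>j. chain_component N mu P j + chain_component N mu Q j)"
    by (intro ext poly_eqI) (simp add: coeff_chain_component[OF assms] add_divide_distrib)
  then show ?thesis
    by (simp add: g2_to_VN_def VN_sd_add_def)
qed

lemma g2_to_VN_smult:
  assumes "N \<ge> 1"
  shows "g2_to_VN N mu (smult c P) = VN_sd_smult c (g2_to_VN N mu P)"
proof -
  have "chain_component N mu (smult c P) = (\<lambda>j. smult c (chain_component N mu P j))"
    by (intro ext poly_eqI) (simp add: coeff_chain_component[OF assms])
  then show ?thesis
    by (simp add: g2_to_VN_def VN_sd_smult_def)
qed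

context
  fixes N :: nat and mu :: "'k::field_char_0"
  assumes N: "N \<ge> 1" and mu: "mu \<noteq> 0"
begin

lemma chain_component_g2_bracket:
  assumes P: "P \<in> poly_plus" and Q: "Q \<in> poly_plus"
  shows "chain_component N mu (g2_bracket N lam mu P Q) =
           VN_act (chain_component N mu P) (coeff Q N) - VN_act (chain_component N mu Q) (coeff P N)"
proof (intro ext poly_eqI)
  fix j k
  note coeffs = coeff_chain_component[OF N] VN_act_def V_act_z_eq_pCons coeff_pCons
  show "coeff (chain_component N mu (g2_bracket N lam mu P Q) j) k =
        coeff ((VN_act (chain_component N mu P) (coeff Q N) - VN_act (chain_component N mu Q) (coeff P N)) j) k"
  proof (cases "j < N")
    case True
    show ?thesis
    proof (cases k)
      case 0
      \<comment> \<open>at 2N = N + N the bracket coefficient is mu N (Q_N P_N - P_N Q_N) = 0\<close>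
      have "coeff (g2_bracket N lam mu P Q) (chain_index N j 0) = 0"
      proof (cases "Suc j = N")
        case True
        then show ?thesis
          using N coeff_g2_bracket_add[of N P Q lam mu N] P Q
          by (simp add: chain_index_def chain_start_def mult_2)
      qed (use N P Q True in \<open>simp add: chain_index_def chain_start_def coeff_g2_bracket_less\<close>)
      then show ?thesis
        using 0 True by (simp add: coeffs)
    next
      case (Suc i)
      let ?n = "chain_index N j i"
      have "mu * of_nat ?n * (coeff Q N * coeff P ?n - coeff P N * coeff Q ?n) /
            (mu * of_nat ?n * chain_scale N mu j i) =
          coeff Q N * (coeff P ?n / chain_scale N mu j i) - coeff P N * (coeff Q ?n / chain_scale N mu j i)"
        using mu chain_scale_nonzero[OF mu] by (simp add: field_simps)
      then show ?thesis
        using N P Q True Suc by (simp add: coeffs coeff_g2_bracket_add)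
    qed
  qed (simp add: coeffs split: nat.split)
qed

lemma g2_to_VN_bracket:
  assumes "P \<in> poly_plus" "Q \<in> poly_plus"
  shows "g2_to_VN N mu (g2_bracket N lam mu P Q) = VN_sd_bracket (g2_to_VN N mu P) (g2_to_VN N mu Q)"
  using assms N
  by (simp add: g2_to_VN_def VN_sd_bracket_def sd_bracket_def chain_component_g2_bracket
      coeff_g2_bracket_add[where n = 0, simplified])

lemma inj_on_g2_to_VN: "inj_on (g2_to_VN N mu) poly_plus"
proof (rule inj_onI)
  fix P Q :: "'k poly"
  assume P: "P \<in> poly_plus" and Q: "Q \<in> poly_plus" and eq: "g2_to_VN N mu P = g2_to_VN N mu Q"
  show "P = Q"
  proof (rule poly_eqI)
    fix n
    consider "n = 0" | "n = N" | "n \<ge> 1" "n \<noteq> N"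
      by linarith
    then show "coeff P n = coeff Q n"
    proof cases
      case 3
      let ?j = "chain_of N n" and ?k = "chain_pos N n"
      have "coeff (chain_component N mu P ?j) ?k = coeff (chain_component N mu Q ?j) ?k"
        using eq by (simp add: g2_to_VN_def)
      then show ?thesis
        using 3 N chain_of_less[OF N] chain_scale_nonzero[OF mu]
        by (simp add: coeff_chain_component chain_index_chain_of)
    qed (use P Q eq in \<open>simp_all add: poly_plus_def g2_to_VN_def\<close>)
  qed
qed

lemma g2_to_VN_VN_to_g2:
  assumes "p \<in> VN_sd_carrier N"
  shows "g2_to_VN N mu (VN_to_g2 N mu p) = p"
proof -
  obtain m x where p: "p = (m, x)" and m: "\<And>j. j \<ge> N \<Longrightarrow> m j = 0"
    using assms by (cases p) (auto simp: VN_sd_carrier_def VN_carrier_def)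
  have "chain_component N mu (VN_to_g2 N mu p) = m"
  proof
    fix j
    show "chain_component N mu (VN_to_g2 N mu p) j = m j"
    proof (cases "j < N")
      case True
      then show ?thesis
        using N chain_index_neq chain_scale_nonzero[OF mu]
        by (intro poly_eqI)
           (simp add: p coeff_chain_component coeff_VN_to_g2 chain_of_chain_index chain_pos_chain_index)
    qed (simp add: chain_component_def m)
  qed
  then show ?thesis
    using N by (simp add: g2_to_VN_def p coeff_VN_to_g2)
qed

lemma g2_to_VN_image: "g2_to_VN N mu ` poly_plus = VN_sd_carrier N"
proof
  show "g2_to_VN N mu ` poly_plus \<subseteq> VN_sd_carrier N"
    by (auto simp: g2_to_VN_def VN_sd_carrier_def VN_carrier_def chain_component_def)
  show "VN_sd_carrier N \<subseteq> g2_to_VN N mu ` poly_plus"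
    using g2_to_VN_VN_to_g2 VN_to_g2_in_poly_plus[OF N] by (metis image_eqI subsetI)
qed

end

theorem mainTheorem16:
  fixes N :: nat and lam mu :: "'k::field_char_0"
  assumes "N \<ge> 1" and "mu \<noteq> 0"
  shows "\<exists>\<phi> :: 'k poly \<Rightarrow> (nat \<Rightarrow> 'k poly) \<times> 'k.
           lie_iso poly_plus smult (+) (g2_bracket N lam mu)
                   (VN_sd_carrier N) VN_sd_smult VN_sd_add VN_sd_bracket \<phi>"
proof
  show "lie_iso poly_plus smult (+) (g2_bracket N lam mu)
          (VN_sd_carrier N) VN_sd_smult VN_sd_add VN_sd_bracket (g2_to_VN N mu)"
    using assms
    by (simp add: lie_iso_def bij_betw_def inj_on_g2_to_VN g2_to_VN_image
        g2_to_VN_add g2_to_VN_smult g2_to_VN_bracket)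
qed

end
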